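(* The twisted torus $L_\gamma$ is a product torus $S^1(r_1)\times S^1(r_2)\subset\mathbb{C}^2$ if and only if $\rho|H|=2$ identically on the torus.
   Context: Let $\gamma:\mathbb{R}/2\pi\mathbb{Z}\to\mathbb{C}\setminus\{0\}$ be a smooth regular simple closed curve written as $\gamma(\beta)=\rho(\beta)e^{if(\beta)}$ with $\rho>0$ smooth and $2\pi$-periodic and $f$ smooth with $f(\beta+2\pi)=f(\beta)+2k\pi$, $k\in\mathbb{Z}$. The twisted torus $L_\gamma$ is the image of $F(\alpha,\beta)=\frac{\rho(\beta)}{\sqrt2}\left(e^{i(f(\beta)+\alpha)},e^{i(f(\beta)-\alpha)}\right)$, $\alpha,\beta\in[0,2\pi)$, in $\mathbb{C}^2$ with the Euclidean metric. $H$ is its mean curvature vector ($g$-trace of the second fundamental form, no normalizing factor, $g$ the induced metric), and $\rho$ is regarded as the function $(\alpha,\beta)\mapsto\rho(\beta)$. For $r>0$, $S^1(r)=\{z\in\mathbb{C}:|z|=r\}$. *)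

theory Defs
  imports "HOL-Analysis.Analysis"
begin

definition smooth_real :: "(real \<Rightarrow> real) \<Rightarrow> bool" where
  "smooth_real u \<longleftrightarrow> (\<forall>n. \<forall>x. ((deriv ^^ n) u) differentiable (at x))"

definition pd1 :: "(real \<Rightarrow> real \<Rightarrow> 'a::real_normed_vector) \<Rightarrow> real \<Rightarrow> real \<Rightarrow> 'a" where
  "pd1 X a b = vector_derivative (\<lambda>s. X s b) (at a)"

definition pd2 :: "(real \<Rightarrow> real \<Rightarrow> 'a::real_normed_vector) \<Rightarrow> real \<Rightarrow> real \<Rightarrow> 'a" where
  "pd2 X a b = vector_derivative (\<lambda>t. X a t) (at b)"

text \<open>Mean curvature vector (trace of the second fundamental form w.r.t. the induced metric,
  no normalising factor) of a parametrised surface X in a real inner product space.\<close>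
definition mean_curv_vec :: "(real \<Rightarrow> real \<Rightarrow> 'a::real_inner) \<Rightarrow> real \<Rightarrow> real \<Rightarrow> 'a" where
  "mean_curv_vec X a b =
    (let Xa = pd1 X a b; Xb = pd2 X a b;
         Xaa = pd1 (pd1 X) a b; Xab = pd2 (pd1 X) a b; Xbb = pd2 (pd2 X) a b;
         gE = inner Xa Xa; gF = inner Xa Xb; gG = inner Xb Xb;
         D = gE * gG - gF * gF;
         i11 = gG / D; i12 = - gF / D; i22 = gE / D;
         tang = (\<lambda>v. (i11 * inner v Xa + i12 * inner v Xb) *\<^sub>R Xa
                   + (i12 * inner v Xa + i22 * inner v Xb) *\<^sub>R Xb);
         nor = (\<lambda>v. v - tang v)
     in i11 *\<^sub>R nor Xaa + (2 * i12) *\<^sub>R nor Xab + i22 *\<^sub>R nor Xbb)"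

definition twisted_F :: "(real \<Rightarrow> real) \<Rightarrow> (real \<Rightarrow> real) \<Rightarrow> real \<Rightarrow> real \<Rightarrow> complex \<times> complex" where
  "twisted_F \<rho> f \<alpha> \<beta> =
     (complex_of_real (\<rho> \<beta> / sqrt 2) * exp (\<i> * complex_of_real (f \<beta> + \<alpha>)),
      complex_of_real (\<rho> \<beta> / sqrt 2) * exp (\<i> * complex_of_real (f \<beta> - \<alpha>)))"

definition twisted_torus :: "(real \<Rightarrow> real) \<Rightarrow> (real \<Rightarrow> real) \<Rightarrow> (complex \<times> complex) set" where
  "twisted_torus \<rho> f = (\<lambda>(\<alpha>, \<beta>). twisted_F \<rho> f \<alpha> \<beta>) ` ({0..<2*pi} \<times> {0..<2*pi})"

end

(*
  The twisted torus is the orbit of the planar curve gamma / sqrt 2 = (rho / sqrt 2) e^(i f), placed on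
  the diagonal of C^2, under the isometries (z, w) |-> (e^(i a) z, e^(-i a) w). Hence |H| depends on beta
  only, and a computation in an orthogonal frame gives |H| = |kappa + theta_s|: the signed curvature of
  gamma plus its angular speed with respect to arclength.

  If rho |H| = 2, continuity forces eps rho (kappa + theta_s) = 2 for a fixed sign eps, and then
  Q = rho^2 - eps rho^3 f' / |gamma'| satisfies Q' = rho rho' (2 - eps rho (kappa + theta_s)) = 0.
  Since Q <= 2 rho^2, and Q = 0 only where rho' = 0, the constant value of Q, read off at a maximum point
  of rho, is either 0, so that rho' vanishes identically, or 2 (max rho)^2, so that rho >= max rho
  everywhere. Either way rho is constant. Conversely, for constant rho = c one finds rho |H| = 2, and f'
  never vanishes, so f winds a nonzero number of times and the torus is all of
  S^1(c / sqrt 2) x S^1(c / sqrt 2).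
*)

theory Submission
  imports Defs "HOL-Library.Periodic_Fun"
begin

definition mean_curv_frame :: "'a::real_inner \<Rightarrow> 'a \<Rightarrow> 'a \<Rightarrow> 'a \<Rightarrow> 'a \<Rightarrow> 'a" where
  "mean_curv_frame Xa Xb Xaa Xab Xbb =
    (let gE = inner Xa Xa; gF = inner Xa Xb; gG = inner Xb Xb;
         D = gE * gG - gF * gF;
         i11 = gG / D; i12 = - gF / D; i22 = gE / D;
         tang = (\<lambda>v. (i11 * inner v Xa + i12 * inner v Xb) *\<^sub>R Xa
                   + (i12 * inner v Xa + i22 * inner v Xb) *\<^sub>R Xb);
         nor = (\<lambda>v. v - tang v)
     in i11 *\<^sub>R nor Xaa + (2 * i12) *\<^sub>R nor Xab + i22 *\<^sub>R nor Xbb)"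

lemma mean_curv_vec_eq_frame:
  "mean_curv_vec X a b =
     mean_curv_frame (pd1 X a b) (pd2 X a b) (pd1 (pd1 X) a b) (pd2 (pd1 X) a b) (pd2 (pd2 X) a b)"
  unfolding mean_curv_vec_def mean_curv_frame_def Let_def ..

lemma mean_curv_frame_isometry:
  assumes "linear T" and "\<And>x y. inner (T x) (T y) = inner x y"
  shows "mean_curv_frame (T a) (T b) (T c) (T d) (T e) = T (mean_curv_frame a b c d e)"
  unfolding mean_curv_frame_def Let_def using assms
  by (simp add: linear_add linear_diff linear_scale)

lemma mean_curv_frame_orthogonal:
  assumes "inner Xa Xb = 0" and "Xa \<noteq> 0" and "Xb \<noteq> 0"
  shows "mean_curv_frame Xa Xb Xaa Xab Xbb =
    (1 / inner Xa Xa) *\<^sub>R (Xaa - (inner Xaa Xa / inner Xa Xa) *\<^sub>R Xa - (inner Xaa Xb / inner Xb Xb) *\<^sub>R Xb)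
  + (1 / inner Xb Xb) *\<^sub>R (Xbb - (inner Xbb Xa / inner Xa Xa) *\<^sub>R Xa - (inner Xbb Xb / inner Xb Xb) *\<^sub>R Xb)"
  unfolding mean_curv_frame_def Let_def using assms by (simp add: inner_commute diff_diff_eq)

definition torus_rotation :: "real \<Rightarrow> complex \<times> complex \<Rightarrow> complex \<times> complex" where
  "torus_rotation a z = (fst z * cis a, snd z * cis (-a))"

lemma inner_mult_unit:
  fixes x y e :: complex
  assumes "cmod e = 1"
  shows "inner (x * e) (y * e) = inner x y"
proof -
  have "(Re e)^2 + (Im e)^2 = 1" using assms by (simp add: cmod_def)
  moreover have "inner (x * e) (y * e) = inner x y * ((Re e)^2 + (Im e)^2)"
    by (simp add: inner_complex_def algebra_simps power2_eq_square)
  ultimately show ?thesis by simp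
qed

lemma linear_torus_rotation: "linear (torus_rotation a)"
  unfolding linear_iff torus_rotation_def by (simp add: algebra_simps scaleR_conv_of_real)

lemma inner_torus_rotation: "inner (torus_rotation a z) (torus_rotation a w) = inner z w"
  unfolding torus_rotation_def by (cases z; cases w) (simp add: inner_mult_unit)

lemma norm_torus_rotation: "norm (torus_rotation a z) = norm z"
  using inner_torus_rotation[of a z z] by (simp add: norm_eq_sqrt_inner)

lemma complex_orthogonal_part:
  fixes w g :: complex
  assumes "g \<noteq> 0"
  shows "w - (inner w g / (cmod g)^2) *\<^sub>R g = \<i> * g * of_real (Im (cnj g * w) / (cmod g)^2)"
proof -
  have "(cmod g)^2 = (Re g)^2 + (Im g)^2" by (simp add: cmod_def)
  moreover have "(Re g)^2 + (Im g)^2 \<noteq> 0" using assms by (simp add: complex_eq_iff)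
  ultimately show ?thesis
    by (simp add: complex_eq_iff inner_complex_def field_simps power2_eq_square; simp add: algebra_simps)
qed

lemma norm_mean_curv_frame_antidiagonal:
  fixes x g u k :: complex and d :: "complex \<times> complex"
  assumes x: "x \<noteq> 0" and g: "g \<noteq> 0"
  shows "sqrt 2 * norm (mean_curv_frame (x, -x) (g, g) (u, u) d (k, k)) =
    \<bar>Im (cnj g * u) / ((cmod x)^2 * cmod g) + Im (cnj g * k) / (cmod g)^3\<bar>"
proof -
  define A where "A = Im (cnj g * u) / (cmod g)^2"
  define B where "B = Im (cnj g * k) / (cmod g)^2"
  have xx: "inner (x, -x) (x, -x) = 2 * (cmod x)^2"
    and gg: "inner (g, g) (g, g) = 2 * (cmod g)^2"
    by (simp_all add: dot_square_norm norm_Pair)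
  have diag: "norm (z, z) = sqrt 2 * cmod z" for z :: complex
    by (simp add: norm_Pair real_sqrt_mult flip: mult_2)
  have proj: "(v, v) - (inner (v, v) (x, -x) / inner (x, -x) (x, -x)) *\<^sub>R (x, -x)
      - (inner (v, v) (g, g) / inner (g, g) (g, g)) *\<^sub>R (g, g) =
      (\<i> * g * of_real (Im (cnj g * v) / (cmod g)^2), \<i> * g * of_real (Im (cnj g * v) / (cmod g)^2))"
    for v
    using complex_orthogonal_part[OF g, of v] unfolding xx gg by (simp add: inner_Pair)
  define \<eta> where "\<eta> = \<i> * g * of_real (A / (2 * (cmod x)^2) + B / (2 * (cmod g)^2))"
  have "mean_curv_frame (x, -x) (g, g) (u, u) d (k, k) =
      (1 / inner (x, -x) (x, -x)) *\<^sub>R (\<i> * g * of_real A, \<i> * g * of_real A)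
    + (1 / inner (g, g) (g, g)) *\<^sub>R (\<i> * g * of_real B, \<i> * g * of_real B)"
    unfolding A_def B_def using x g
    by (subst mean_curv_frame_orthogonal) (simp_all only: proj, simp_all add: inner_Pair zero_prod_def)
  also have "\<dots> = (\<eta>, \<eta>)"
    unfolding xx gg \<eta>_def by (simp add: scaleR_conv_of_real algebra_simps)
  finally have "sqrt 2 * norm (mean_curv_frame (x, -x) (g, g) (u, u) d (k, k)) = 2 * cmod \<eta>"
    by (simp add: diag flip: mult.assoc)
  also have "\<dots> = \<bar>2 * cmod g * (A / (2 * (cmod x)^2) + B / (2 * (cmod g)^2))\<bar>"
    unfolding \<eta>_def by (simp only: norm_mult norm_of_real norm_ii) (simp add: abs_mult)
  also have "2 * cmod g * (A / (2 * (cmod x)^2) + B / (2 * (cmod g)^2)) =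
      Im (cnj g * u) / ((cmod x)^2 * cmod g) + Im (cnj g * k) / (cmod g)^3"
    using x g unfolding A_def B_def by (simp add: field_simps power2_eq_square power3_eq_cube)
  finally show ?thesis .
qed

lemma has_vector_derivative_cis:
  assumes "(g has_real_derivative g') (at t)"
  shows "((\<lambda>t. cis (g t)) has_vector_derivative (\<i> * of_real g' * cis (g t))) (at t)"
  using has_derivative_cis[OF assms[unfolded has_field_derivative_def]]
  by (simp add: has_vector_derivative_def scaleR_conv_of_real algebra_simps)

lemma pd1_torus_rotation:
  "pd1 (\<lambda>a b. torus_rotation a (u b, v b)) = (\<lambda>a b. torus_rotation a (\<i> * u b, - \<i> * v b))"
proof (intro ext)
  fix a b
  have "((\<lambda>s. torus_rotation s (u b, v b)) has_vector_derivative torus_rotation a (\<i> * u b, - \<i> * v b)) (at a)"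
    unfolding torus_rotation_def fst_conv snd_conv
  proof (intro has_vector_derivative_Pair)
    show "((\<lambda>s. u b * cis s) has_vector_derivative \<i> * u b * cis a) (at a)"
      using has_vector_derivative_mult_right[OF has_vector_derivative_cis[OF DERIV_ident], of "u b"]
      by (simp add: algebra_simps)
    show "((\<lambda>s. v b * cis (- s)) has_vector_derivative - \<i> * v b * cis (- a)) (at a)"
      using has_vector_derivative_mult_right[OF has_vector_derivative_cis[OF DERIV_minus[OF DERIV_ident]], of "v b"]
      by (simp add: algebra_simps)
  qed
  then show "pd1 (\<lambda>a b. torus_rotation a (u b, v b)) a b = torus_rotation a (\<i> * u b, - \<i> * v b)"
    unfolding pd1_def by (rule vector_derivative_at)
qed

lemma pd2_torus_rotation:
  assumes "\<And>t. (u has_vector_derivative u' t) (at t)" and "\<And>t. (v has_vector_derivative v' t) (at t)"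
  shows "pd2 (\<lambda>a b. torus_rotation a (u b, v b)) = (\<lambda>a b. torus_rotation a (u' b, v' b))"
proof (intro ext)
  fix a b
  have "((\<lambda>t. torus_rotation a (u t, v t)) has_vector_derivative torus_rotation a (u' b, v' b)) (at b)"
    unfolding torus_rotation_def fst_conv snd_conv
    by (intro has_vector_derivative_Pair has_vector_derivative_mult_left assms)
  then show "pd2 (\<lambda>a b. torus_rotation a (u b, v b)) a b = torus_rotation a (u' b, v' b)"
    unfolding pd2_def by (rule vector_derivative_at)
qed

lemma norm_mean_curv_torus_rotation:
  assumes c: "\<And>t. (c has_vector_derivative c' t) (at t)"
    and c': "\<And>t. (c' has_vector_derivative c'' t) (at t)"
    and "c b \<noteq> 0" and "c' b \<noteq> 0"
  shows "sqrt 2 * norm (mean_curv_vec (\<lambda>a b. torus_rotation a (c b, c b)) a b) =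
    \<bar>Im (cnj (c' b) * c'' b) / (cmod (c' b))^3 + Im (cnj (c b) * c' b) / ((cmod (c b))^2 * cmod (c' b))\<bar>"
proof -
  have ic: "\<And>t. ((\<lambda>t. \<i> * c t) has_vector_derivative \<i> * c' t) (at t)"
    and mic: "\<And>t. ((\<lambda>t. - \<i> * c t) has_vector_derivative - \<i> * c' t) (at t)"
    by (intro has_vector_derivative_mult_right c)+
  let ?T = "torus_rotation a"
  have "mean_curv_vec (\<lambda>a b. torus_rotation a (c b, c b)) a b =
      mean_curv_frame (?T (\<i> * c b, - (\<i> * c b))) (?T (c' b, c' b)) (?T (- c b, - c b))
        (?T (\<i> * c' b, - \<i> * c' b)) (?T (c'' b, c'' b))"
    unfolding mean_curv_vec_eq_frame pd1_torus_rotation pd2_torus_rotation[OF c c]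
      pd2_torus_rotation[OF ic mic] pd2_torus_rotation[OF c' c']
    by simp
  also have "\<dots> = ?T (mean_curv_frame (\<i> * c b, - (\<i> * c b)) (c' b, c' b) (- c b, - c b)
        (\<i> * c' b, - \<i> * c' b) (c'' b, c'' b))"
    by (rule mean_curv_frame_isometry[OF linear_torus_rotation inner_torus_rotation])
  finally have "sqrt 2 * norm (mean_curv_vec (\<lambda>a b. torus_rotation a (c b, c b)) a b) =
      \<bar>Im (cnj (c' b) * - c b) / ((cmod (\<i> * c b))^2 * cmod (c' b)) + Im (cnj (c' b) * c'' b) / (cmod (c' b))^3\<bar>"
    using assms(3,4) by (simp add: norm_torus_rotation norm_mean_curv_frame_antidiagonal)
  then show ?thesis by (simp add: norm_mult algebra_simps)
qed

text \<open>The right-hand side is \<open>|\<kappa> + \<theta>\<^sub>s|\<close>: the signed curvature of \<open>\<gamma>\<close> plus its angular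
  speed with respect to arclength.\<close>

lemma norm_mean_curv_twisted_curve:
  fixes \<gamma> :: "real \<Rightarrow> complex"
  assumes \<gamma>: "\<And>t. (\<gamma> has_vector_derivative \<gamma>' t) (at t)"
    and \<gamma>': "\<And>t. (\<gamma>' has_vector_derivative \<gamma>'' t) (at t)"
    and nz: "\<gamma> b \<noteq> 0" "\<gamma>' b \<noteq> 0"
  shows "norm (mean_curv_vec (\<lambda>a b. torus_rotation a (\<gamma> b / sqrt 2, \<gamma> b / sqrt 2)) a b) =
    \<bar>Im (cnj (\<gamma>' b) * \<gamma>'' b) / (cmod (\<gamma>' b))^3
      + Im (cnj (\<gamma> b) * \<gamma>' b) / ((cmod (\<gamma> b))^2 * cmod (\<gamma>' b))\<bar>"
    (is "?H = \<bar>?\<kappa> + ?\<theta>\<bar>")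
proof -
  let ?s = "complex_of_real (sqrt 2)"
  have Im_scaled: "Im (cnj (z / ?s) * (w / ?s)) = Im (cnj z * w) / 2" for z w
    by (simp add: power2_eq_square)
  have norm_scaled: "cmod (z / ?s) = cmod z / sqrt 2" for z
    by (simp add: norm_divide)
  have "sqrt 2 * ?H =
      \<bar>Im (cnj (\<gamma>' b / ?s) * (\<gamma>'' b / ?s)) / (cmod (\<gamma>' b / ?s))^3
        + Im (cnj (\<gamma> b / ?s) * (\<gamma>' b / ?s)) / ((cmod (\<gamma> b / ?s))^2 * cmod (\<gamma>' b / ?s))\<bar>"
    using nz by (intro norm_mean_curv_torus_rotation has_vector_derivative_divide \<gamma> \<gamma>') simp_all
  also have "\<dots> = \<bar>sqrt 2 * (?\<kappa> + ?\<theta>)\<bar>"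
    unfolding Im_scaled norm_scaled using nz
    by (intro arg_cong[where f = abs]) (simp add: field_simps power2_eq_square power3_eq_cube)
  finally show ?thesis by (simp add: abs_mult)
qed

lemma has_vector_derivative_rotating:
  assumes "(x has_real_derivative x') (at t)" and "(y has_real_derivative y') (at t)"
    and "(\<theta> has_real_derivative \<theta>') (at t)"
  shows "((\<lambda>t. (complex_of_real (x t) + \<i> * complex_of_real (y t)) * cis (\<theta> t)) has_vector_derivative
      (complex_of_real (x' - y t * \<theta>') + \<i> * complex_of_real (y' + x t * \<theta>')) * cis (\<theta> t)) (at t)"
proof -
  have "((\<lambda>t. complex_of_real (x t) + \<i> * complex_of_real (y t)) has_vector_derivative
      complex_of_real x' + \<i> * complex_of_real y') (at t)"
    by (intro has_vector_derivative_add has_vector_derivative_mult_right has_vector_derivative_of_real assms)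
  from has_vector_derivative_mult[OF this has_vector_derivative_cis[OF assms(3)]] show ?thesis
    by (rule has_vector_derivative_eq_rhs) (simp add: algebra_simps)
qed

lemma Im_cnj_rotating:
  "Im (cnj ((complex_of_real x + \<i> * complex_of_real y) * cis \<theta>)
        * ((complex_of_real u + \<i> * complex_of_real v) * cis \<theta>)) = x * v - y * u"
proof -
  have rearrange: "cnj (z * c) * (w * c) = cnj z * w * (c * cnj c)" for z w c :: complex
    by (simp add: ac_simps)
  have unit: "cis \<theta> * cnj (cis \<theta>) = 1"
    by (simp flip: complex_norm_square)
  have rot: "cnj (z * cis \<theta>) * (w * cis \<theta>) = cnj z * w" for z w
    unfolding rearrange unit by (rule mult_1_right)
  show ?thesis unfolding rot by simp
qed

lemma norm_rotating:
  "cmod ((complex_of_real x + \<i> * complex_of_real y) * cis \<theta>) = sqrt (x^2 + y^2)"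
  by (simp only: norm_mult norm_cis) (simp add: cmod_def)

lemma twisted_F_eq_torus_rotation:
  assumes "\<gamma> = (\<lambda>t. complex_of_real (\<rho> t) * cis (f t))"
  shows "twisted_F \<rho> f = (\<lambda>a b. torus_rotation a (\<gamma> b / sqrt 2, \<gamma> b / sqrt 2))"
proof (intro ext)
  fix a b
  have "exp (\<i> * complex_of_real (f b + a)) = cis (f b) * cis a"
    and "exp (\<i> * complex_of_real (f b - a)) = cis (f b) * cis (- a)"
    by (simp_all only: cis_mult cis_conv_exp[symmetric] diff_conv_add_uminus)
  then show "twisted_F \<rho> f a b = torus_rotation a (\<gamma> b / sqrt 2, \<gamma> b / sqrt 2)"
    unfolding twisted_F_def torus_rotation_def assms by simp
qed

lemma floor_period_mem:
  fixes p x :: real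
  assumes "p > 0"
  shows "x - of_int \<lfloor>x / p\<rfloor> * p \<in> {0..<p}"
proof -
  have "x - of_int \<lfloor>x / p\<rfloor> * p = frac (x / p) * p"
    using assms by (simp add: frac_def algebra_simps)
  then show ?thesis
    using assms frac_ge_0[of "x / p"] frac_lt_1[of "x / p"] by simp
qed

lemma range_periodic:
  fixes g :: "real \<Rightarrow> 'a"
  assumes "p > 0" and "\<And>x. g (x + p) = g x"
  shows "range g = g ` {0..<p}"
proof -
  interpret periodic_fun_simple g p by standard (rule assms(2))
  have "g x \<in> g ` {0..<p}" for x
    using minus_of_int[of x "\<lfloor>x / p\<rfloor>"] floor_period_mem[OF assms(1), of x]
    by (metis rev_image_eqI)
  then show ?thesis by blast
qed

lemma periodic_attains_max:
  fixes g :: "real \<Rightarrow> real"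
  assumes "continuous_on UNIV g" and "p > 0" and "\<And>x. g (x + p) = g x"
  obtains b where "b \<in> {0..<p}" and "\<And>y. g y \<le> g b"
proof -
  have "continuous_on {0..p} g" using assms(1) continuous_on_subset by blast
  then obtain m where m: "m \<in> {0..p}" "\<And>y. y \<in> {0..p} \<Longrightarrow> g y \<le> g m"
    using continuous_attains_sup[of "{0..p}" g] assms(2) by auto
  have range: "range g = g ` {0..<p}" using assms(2,3) by (rule range_periodic)
  then obtain b where b: "b \<in> {0..<p}" "g m = g b" by blast
  have "g y \<le> g b" for y
  proof -
    obtain y' where "y' \<in> {0..<p}" "g y = g y'" using range by blast
    then show ?thesis using m(2) b(2) by simp
  qed
  with b(1) show ?thesis by (rule that)
qed

lemma continuous_increasing_hits_angle:
  fixes f :: "real \<Rightarrow> real"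
  assumes "a \<le> b" and "continuous_on {a..b} f" and "f a + 2 * pi \<le> f b"
  obtains \<beta> m where "\<beta> \<in> {a..<b}" and "f \<beta> = t + 2 * pi * of_int m"
proof -
  define y where "y = (t - f a) - of_int \<lfloor>(t - f a) / (2 * pi)\<rfloor> * (2 * pi)"
  have y: "0 \<le> y" "y < 2 * pi"
    using floor_period_mem[of "2 * pi" "t - f a"] unfolding y_def by auto
  obtain \<beta> where \<beta>: "\<beta> \<in> {a..b}" "f \<beta> = f a + y"
    using IVT'[of f a "f a + y" b] assms y by auto
  moreover have "\<beta> \<noteq> b" using \<beta> y assms(3) by auto
  moreover have "f \<beta> = t + 2 * pi * of_int (- \<lfloor>(t - f a) / (2 * pi)\<rfloor>)"
    using \<beta>(2) unfolding y_def by simp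
  ultimately show ?thesis using that[of \<beta> "- \<lfloor>(t - f a) / (2 * pi)\<rfloor>"] by auto
qed

lemma continuous_winding_hits_angle:
  fixes f :: "real \<Rightarrow> real"
  assumes "a \<le> b" and "continuous_on {a..b} f" and "2 * pi \<le> \<bar>f b - f a\<bar>"
  obtains \<beta> m where "\<beta> \<in> {a..<b}" and "f \<beta> = t + 2 * pi * of_int m"
proof (cases "f a + 2 * pi \<le> f b")
  case True
  with assms(1,2) show ?thesis by (rule continuous_increasing_hits_angle) (rule that)
next
  case False
  then have "- f a + 2 * pi \<le> - f b" using assms(3) by linarith
  moreover have "continuous_on {a..b} (\<lambda>x. - f x)" using assms(2) by (rule continuous_on_minus)
  ultimately obtain \<beta> m where "\<beta> \<in> {a..<b}" "- f \<beta> = - t + 2 * pi * of_int m"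
    using continuous_increasing_hits_angle[of a b "\<lambda>x. - f x" "- t"] assms(1) by blast
  then show ?thesis using that[of \<beta> "- m"] by simp
qed

lemma cis_add_multiple_2pi: "cis (\<theta> + 2 * pi * of_int k) = cis \<theta>"
  by (simp flip: cis_mult)

lemma twisted_torus_const:
  fixes f :: "real \<Rightarrow> real"
  assumes "c > 0" and "continuous_on {0..2*pi} f" and "2 * pi \<le> \<bar>f (2*pi) - f 0\<bar>"
  shows "twisted_torus (\<lambda>_. c) f = {(z, w). cmod z = c / sqrt 2 \<and> cmod w = c / sqrt 2}"
proof
  show "twisted_torus (\<lambda>_. c) f \<subseteq> {(z, w). cmod z = c / sqrt 2 \<and> cmod w = c / sqrt 2}"
    unfolding twisted_torus_def twisted_F_def using assms(1)
    by (auto simp: norm_mult norm_divide norm_exp_eq_Re)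
next
  let ?r = "c / sqrt 2"
  show "{(z, w). cmod z = ?r \<and> cmod w = ?r} \<subseteq> twisted_torus (\<lambda>_. c) f"
  proof clarify
    fix z w assume z: "cmod z = ?r" and w: "cmod w = ?r"
    define \<theta>1 where "\<theta>1 = Arg z"
    define \<theta>2 where "\<theta>2 = Arg w"
    obtain \<beta> m where \<beta>: "\<beta> \<in> {0..<2*pi}"
      and f\<beta>: "f \<beta> = (\<theta>1 + \<theta>2) / 2 + 2 * pi * of_int m"
      using continuous_winding_hits_angle[of 0 "2*pi" f] assms(2,3) by auto
    define n where "n = \<lfloor>((\<theta>1 - \<theta>2) / 2) / (2 * pi)\<rfloor>"
    define \<alpha> where "\<alpha> = (\<theta>1 - \<theta>2) / 2 - of_int n * (2 * pi)"
    have \<alpha>: "\<alpha> \<in> {0..<2*pi}"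
      unfolding \<alpha>_def n_def by (rule floor_period_mem) simp
    have "f \<beta> + \<alpha> = \<theta>1 + 2 * pi * of_int (m - n)" and "f \<beta> - \<alpha> = \<theta>2 + 2 * pi * of_int (m + n)"
      unfolding f\<beta> \<alpha>_def by (simp_all add: field_simps)
    then have "twisted_F (\<lambda>_. c) f \<alpha> \<beta> =
        (of_real ?r * cis (\<theta>1 + 2 * pi * of_int (m - n)), of_real ?r * cis (\<theta>2 + 2 * pi * of_int (m + n)))"
      unfolding twisted_F_def cis_conv_exp by simp
    also have "\<dots> = (z, w)"
      unfolding cis_add_multiple_2pi \<theta>1_def \<theta>2_def
      using rcis_cmod_Arg[of z] rcis_cmod_Arg[of w] z w by (simp add: rcis_def)
    finally show "(z, w) \<in> twisted_torus (\<lambda>_. c) f"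
      unfolding twisted_torus_def using \<alpha> \<beta>
      by (metis (no_types, lifting) case_prod_conv mem_Sigma_iff rev_image_eqI)
  qed
qed

lemma product_twisted_torus_imp_const:
  assumes pos: "\<And>x. \<rho> x > 0" and per: "\<And>x. \<rho> (x + 2*pi) = \<rho> x"
    and torus: "twisted_torus \<rho> f = {(z, w). cmod z = r1 \<and> cmod w = r2}"
  shows "\<rho> x = sqrt 2 * r1"
proof -
  have "\<rho> b = sqrt 2 * r1" if b: "b \<in> {0..<2*pi}" for b
  proof -
    have "twisted_F \<rho> f 0 b \<in> twisted_torus \<rho> f" unfolding twisted_torus_def using b by force
    then have "\<rho> b / sqrt 2 = r1"
      using torus pos[of b] by (simp add: twisted_F_def norm_mult norm_divide norm_exp_eq_Re)
    then show ?thesis by (simp add: field_simps)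
  qed
  moreover have "range \<rho> = \<rho> ` {0..<2*pi}" using per by (intro range_periodic) simp_all
  ultimately show ?thesis by (metis imageE rangeI)
qed

lemma smooth_real_deriv: "smooth_real u \<Longrightarrow> smooth_real (deriv u)"
  unfolding smooth_real_def by (metis comp_apply funpow_Suc_right)

lemma smooth_real_has_deriv: "smooth_real u \<Longrightarrow> (u has_real_derivative deriv u x) (at x)"
  unfolding smooth_real_def using DERIV_deriv_iff_real_differentiable by (metis funpow_0)

lemma smooth_real_isCont: "smooth_real u \<Longrightarrow> isCont u x"
  using smooth_real_has_deriv DERIV_isCont by blast

lemma regular_polar_curve:
  assumes "(\<rho> has_real_derivative \<rho>') (at t)" and "(f has_real_derivative f') (at t)"
    and "vector_derivative (\<lambda>t. complex_of_real (\<rho> t) * exp (\<i> * complex_of_real (f t))) (at t) \<noteq> 0"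
  shows "\<rho>' \<noteq> 0 \<or> f' \<noteq> 0"
proof -
  have "((\<lambda>t. complex_of_real (\<rho> t) * exp (\<i> * complex_of_real (f t))) has_vector_derivative
      (complex_of_real \<rho>' + \<i> * complex_of_real (\<rho> t * f')) * cis (f t)) (at t)"
    using has_vector_derivative_rotating[OF assms(1) _ assms(2), where y = "\<lambda>_. 0" and y' = 0]
    by (simp add: cis_conv_exp)
  with assms(3) show ?thesis by (metis vector_derivative_at mult_zero_left
      mult_zero_right of_real_0 add_0)
qed

locale twisted_profile =
  fixes \<rho> f \<rho>' \<rho>'' f' f'' :: "real \<Rightarrow> real"
  assumes rho_deriv: "\<And>x. (\<rho> has_real_derivative \<rho>' x) (at x)"
    and rho'_deriv: "\<And>x. (\<rho>' has_real_derivative \<rho>'' x) (at x)"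
    and f_deriv: "\<And>x. (f has_real_derivative f' x) (at x)"
    and f'_deriv: "\<And>x. (f' has_real_derivative f'' x) (at x)"
    and rho''_cont: "\<And>x. isCont \<rho>'' x"
    and f''_cont: "\<And>x. isCont f'' x"
    and rho_pos: "\<And>x. \<rho> x > 0"
    and regular: "\<And>x. \<rho>' x \<noteq> 0 \<or> f' x \<noteq> 0"
begin

definition speed_sq :: "real \<Rightarrow> real" where
  "speed_sq x = \<rho>' x ^ 2 + (\<rho> x * f' x) ^ 2"

text \<open>\<open>\<kappa> + \<theta>\<^sub>s\<close> for the curve \<open>\<gamma> = \<rho> exp (i f)\<close>.\<close>

definition mean_curv :: "real \<Rightarrow> real" where
  "mean_curv x = (2 * \<rho> x ^ 2 * f' x ^ 3 + 3 * \<rho>' x ^ 2 * f' x + \<rho> x * \<rho>' x * f'' x - \<rho> x * \<rho>'' x * f' x)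
                 / (speed_sq x * sqrt (speed_sq x))"

text \<open>A first integral of \<open>\<epsilon> \<rho> mean_curv = 2\<close>, by \<open>first_integral_deriv\<close>.\<close>

definition first_integral :: "real \<Rightarrow> real \<Rightarrow> real" where
  "first_integral \<epsilon> x = \<rho> x ^ 2 - \<epsilon> * \<rho> x ^ 3 * f' x / sqrt (speed_sq x)"

lemma speed_sq_pos: "speed_sq x > 0"
  using regular[of x] rho_pos[of x] unfolding speed_sq_def
  by (auto intro: add_pos_nonneg add_nonneg_pos)

lemma norm_mean_curv_vec_twisted_F: "norm (mean_curv_vec (twisted_F \<rho> f) a b) = \<bar>mean_curv b\<bar>"
proof -
  define \<gamma> where "\<gamma> = (\<lambda>t. complex_of_real (\<rho> t) * cis (f t))"
  define \<gamma>' where "\<gamma>' t = (complex_of_real (\<rho>' t) + \<i> * complex_of_real (\<rho> t * f' t)) * cis (f t)" for t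
  define \<gamma>'' where "\<gamma>'' t = (complex_of_real (\<rho>'' t - \<rho> t * f' t ^ 2)
      + \<i> * complex_of_real (2 * \<rho>' t * f' t + \<rho> t * f'' t)) * cis (f t)" for t
  have d\<gamma>: "(\<gamma> has_vector_derivative \<gamma>' t) (at t)" for t
    using has_vector_derivative_rotating[OF rho_deriv _ f_deriv, where y = "\<lambda>_. 0" and y' = 0]
    unfolding \<gamma>_def \<gamma>'_def by simp
  have d\<gamma>': "(\<gamma>' has_vector_derivative \<gamma>'' t) (at t)" for t
    using has_vector_derivative_rotating[OF rho'_deriv DERIV_mult[OF rho_deriv f'_deriv] f_deriv, of t]
    unfolding \<gamma>'_def \<gamma>''_def by (simp add: algebra_simps power2_eq_square)
  have \<gamma>_rot: "\<gamma> t = (complex_of_real (\<rho> t) + \<i> * complex_of_real 0) * cis (f t)" for t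
    by (simp add: \<gamma>_def)
  have norm_\<gamma>': "cmod (\<gamma>' b) = sqrt (speed_sq b)"
    unfolding \<gamma>'_def norm_rotating speed_sq_def ..
  have "\<gamma> b \<noteq> 0" "\<gamma>' b \<noteq> 0"
    using rho_pos[of b] speed_sq_pos[of b] norm_\<gamma>' by (auto simp: \<gamma>_def)
  then have "norm (mean_curv_vec (twisted_F \<rho> f) a b) =
      \<bar>Im (cnj (\<gamma>' b) * \<gamma>'' b) / (cmod (\<gamma>' b))^3
        + Im (cnj (\<gamma> b) * \<gamma>' b) / ((cmod (\<gamma> b))^2 * cmod (\<gamma>' b))\<bar>"
    unfolding twisted_F_eq_torus_rotation[OF \<gamma>_def] by (rule norm_mean_curv_twisted_curve[OF d\<gamma> d\<gamma>'])
  also have "\<dots> = \<bar>mean_curv b\<bar>"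
  proof (rule arg_cong[where f = abs])
    have Im_\<gamma>'_\<gamma>'': "Im (cnj (\<gamma>' b) * \<gamma>'' b) =
        2 * \<rho>' b ^ 2 * f' b + \<rho> b * \<rho>' b * f'' b - \<rho> b * \<rho>'' b * f' b + \<rho> b ^ 2 * f' b ^ 3"
      unfolding \<gamma>'_def \<gamma>''_def Im_cnj_rotating by (simp add: algebra_simps power2_eq_square power3_eq_cube)
    have Im_\<gamma>_\<gamma>': "Im (cnj (\<gamma> b) * \<gamma>' b) = \<rho> b ^ 2 * f' b"
      unfolding \<gamma>_rot \<gamma>'_def Im_cnj_rotating by (simp add: power2_eq_square)
    have norm_\<gamma>: "cmod (\<gamma> b) = \<rho> b"
      unfolding \<gamma>_rot norm_rotating using rho_pos[of b] by simp
    have sqrt_sq: "sqrt (speed_sq b) * sqrt (speed_sq b) = speed_sq b"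
      using speed_sq_pos[of b] by simp
    have "Im (cnj (\<gamma>' b) * \<gamma>'' b) / (cmod (\<gamma>' b))^3
        + Im (cnj (\<gamma> b) * \<gamma>' b) / ((cmod (\<gamma> b))^2 * cmod (\<gamma>' b)) =
        (2 * \<rho>' b ^ 2 * f' b + \<rho> b * \<rho>' b * f'' b - \<rho> b * \<rho>'' b * f' b + \<rho> b ^ 2 * f' b ^ 3
          + f' b * speed_sq b) / (speed_sq b * sqrt (speed_sq b))"
      unfolding Im_\<gamma>'_\<gamma>'' Im_\<gamma>_\<gamma>' norm_\<gamma> norm_\<gamma>' using rho_pos[of b] speed_sq_pos[of b] sqrt_sq
      by (simp add: field_simps power2_eq_square power3_eq_cube)
    also have "\<dots> = mean_curv b"
      unfolding mean_curv_def by (simp add: speed_sq_def algebra_simps power2_eq_square power3_eq_cube)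
    finally show "Im (cnj (\<gamma>' b) * \<gamma>'' b) / (cmod (\<gamma>' b))^3
        + Im (cnj (\<gamma> b) * \<gamma>' b) / ((cmod (\<gamma> b))^2 * cmod (\<gamma>' b)) = mean_curv b" .
  qed
  finally show ?thesis .
qed

lemma first_integral_deriv:
  "(first_integral \<epsilon> has_real_derivative \<rho> x * \<rho>' x * (2 - \<epsilon> * \<rho> x * mean_curv x)) (at x)"
proof -
  define G where "G = speed_sq x"
  define G' where "G' = 2 * \<rho>' x * \<rho>'' x + 2 * (\<rho> x * f' x) * (\<rho>' x * f' x + \<rho> x * f'' x)"
  define A where "A = 3 * \<rho> x ^ 2 * \<rho>' x * f' x + \<rho> x ^ 3 * f'' x"
  define N where "N = 2 * \<rho> x ^ 2 * f' x ^ 3 + 3 * \<rho>' x ^ 2 * f' x + \<rho> x * \<rho>' x * f'' x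
      - \<rho> x * \<rho>'' x * f' x"
  have G: "G > 0" unfolding G_def by (rule speed_sq_pos)
  have dG: "(speed_sq has_real_derivative G') (at x)"
    unfolding speed_sq_def[abs_def]
    by (rule DERIV_cong[OF DERIV_add[OF DERIV_power[OF rho'_deriv] DERIV_power[OF DERIV_mult[OF rho_deriv f'_deriv]]]])
       (simp add: G'_def)
  have "((\<lambda>x. sqrt (speed_sq x)) has_real_derivative inverse (sqrt G) / 2 * G') (at x)"
    using DERIV_chain2[OF DERIV_real_sqrt[OF G[unfolded G_def]] dG] unfolding G_def .
  moreover have "((\<lambda>x. \<epsilon> * \<rho> x ^ 3 * f' x) has_real_derivative \<epsilon> * A) (at x)"
    unfolding A_def by (auto intro!: derivative_eq_intros rho_deriv f'_deriv simp: algebra_simps power2_eq_square)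
  moreover have "((\<lambda>x. \<rho> x ^ 2) has_real_derivative 2 * \<rho> x * \<rho>' x) (at x)"
    by (auto intro!: derivative_eq_intros rho_deriv)
  moreover have "sqrt (speed_sq x) \<noteq> 0" using G by (simp add: G_def)
  ultimately have "(first_integral \<epsilon> has_real_derivative 2 * \<rho> x * \<rho>' x -
      (\<epsilon> * A * sqrt G - \<epsilon> * \<rho> x ^ 3 * f' x * (inverse (sqrt G) / 2 * G')) / (sqrt G * sqrt G)) (at x)"
    unfolding first_integral_def[abs_def] G_def by (intro DERIV_diff DERIV_divide)
  moreover have "2 * \<rho> x * \<rho>' x
      - (\<epsilon> * A * sqrt G - \<epsilon> * \<rho> x ^ 3 * f' x * (inverse (sqrt G) / 2 * G')) / (sqrt G * sqrt G)
      = \<rho> x * \<rho>' x * (2 - \<epsilon> * \<rho> x * mean_curv x)"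
  proof -
    have "(\<epsilon> * A * sqrt G - \<epsilon> * \<rho> x ^ 3 * f' x * (inverse (sqrt G) / 2 * G')) / (sqrt G * sqrt G)
        = \<epsilon> * (A * (sqrt G * sqrt G) - \<rho> x ^ 3 * f' x * G' / 2) / (sqrt G * sqrt G * sqrt G)"
      using G by (simp add: field_simps)
    also have "\<dots> = \<epsilon> * (A * G - \<rho> x ^ 3 * f' x * G' / 2) / (G * sqrt G)"
      using G by simp
    also have "A * G - \<rho> x ^ 3 * f' x * G' / 2 = \<rho> x ^ 2 * \<rho>' x * N"
      unfolding A_def N_def G_def G'_def speed_sq_def by (simp add: algebra_simps power2_eq_square power3_eq_cube)
    also have "\<epsilon> * (\<rho> x ^ 2 * \<rho>' x * N) / (G * sqrt G) = \<epsilon> * \<rho> x ^ 2 * \<rho>' x * (N / (G * sqrt G))"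
      by simp
    also have "N / (G * sqrt G) = mean_curv x"
      unfolding mean_curv_def N_def G_def ..
    finally show ?thesis by (simp add: algebra_simps power2_eq_square)
  qed
  ultimately show ?thesis by simp
qed

lemma rho_cont: "isCont \<rho> x" and rho'_cont: "isCont \<rho>' x"
  and f_cont: "isCont f x" and f'_cont: "isCont f' x"
  using rho_deriv rho'_deriv f_deriv f'_deriv by (blast intro: DERIV_isCont)+

lemma mean_curv_cont: "isCont mean_curv x"
  using speed_sq_pos[of x] unfolding mean_curv_def speed_sq_def
  by (intro continuous_intros rho_cont rho'_cont f'_cont rho''_cont f''_cont) auto

lemma first_integral_alt:
  "first_integral \<epsilon> x = \<rho> x ^ 2 * (1 - \<epsilon> * (\<rho> x * f' x / sqrt (speed_sq x)))"
  unfolding first_integral_def by (simp add: algebra_simps power2_eq_square power3_eq_cube)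

lemma abs_rho_f'_div_speed_le_1: "\<bar>\<rho> x * f' x / sqrt (speed_sq x)\<bar> \<le> 1"
proof -
  have "\<bar>\<rho> x * f' x\<bar> \<le> sqrt (speed_sq x)"
    unfolding speed_sq_def by (metis add_0 add_right_mono real_sqrt_abs real_sqrt_le_mono zero_le_power2)
  then show ?thesis using speed_sq_pos[of x] by (simp add: abs_divide)
qed

lemma first_integral_le:
  assumes "\<bar>\<epsilon>\<bar> = 1"
  shows "first_integral \<epsilon> x \<le> 2 * \<rho> x ^ 2"
proof -
  define s where "s = \<rho> x * f' x / sqrt (speed_sq x)"
  have "\<bar>\<epsilon> * s\<bar> \<le> 1" using abs_rho_f'_div_speed_le_1[of x] assms by (simp add: s_def abs_mult)
  then have "1 - \<epsilon> * s \<le> 2" by linarith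
  from mult_left_mono[OF this, of "\<rho> x ^ 2"] show ?thesis
    unfolding first_integral_alt s_def[symmetric] by simp
qed

lemma first_integral_eq_0_imp:
  assumes "\<bar>\<epsilon>\<bar> = 1" and "first_integral \<epsilon> x = 0"
  shows "\<rho>' x = 0"
proof -
  define s where "s = \<rho> x * f' x / sqrt (speed_sq x)"
  have "\<epsilon> * s = 1"
    using assms(2) rho_pos[of x] unfolding first_integral_alt s_def[symmetric] by simp
  then have "\<bar>s\<bar> = 1" using assms(1) by (metis abs_1 abs_mult mult_1)
  then have "\<bar>\<rho> x * f' x\<bar> = sqrt (speed_sq x)"
    using speed_sq_pos[of x] by (simp add: s_def abs_divide)
  then have "(\<rho> x * f' x) ^ 2 = speed_sq x"
    using speed_sq_pos[of x] by (metis power2_abs real_sqrt_pow2 less_imp_le)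
  then show ?thesis unfolding speed_sq_def by simp
qed

lemma first_integral_critical:
  assumes "\<bar>\<epsilon>\<bar> = 1" and "\<rho>' x = 0"
  shows "first_integral \<epsilon> x = 0 \<or> first_integral \<epsilon> x = 2 * \<rho> x ^ 2"
proof -
  have "sqrt (speed_sq x) = \<bar>\<rho> x * f' x\<bar>"
    unfolding speed_sq_def assms(2) by simp
  moreover have "\<rho> x * f' x \<noteq> 0" using speed_sq_pos[of x] unfolding speed_sq_def assms(2) by auto
  ultimately have "\<bar>\<epsilon> * (\<rho> x * f' x / sqrt (speed_sq x))\<bar> = 1"
    using assms(1) by (simp add: abs_mult abs_divide)
  then have "\<epsilon> * (\<rho> x * f' x / sqrt (speed_sq x)) = 1 \<or> \<epsilon> * (\<rho> x * f' x / sqrt (speed_sq x)) = -1"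
    by linarith
  then show ?thesis unfolding first_integral_alt by auto
qed

lemma derivs_eq_0_of_const_rho:
  assumes "\<And>x. \<rho> x = c"
  shows "\<rho>' x = 0" and "\<rho>'' x = 0"
proof -
  have "\<rho> = (\<lambda>_. c)" using assms by auto
  then have \<rho>': "\<rho>' = (\<lambda>_. 0)"
    using rho_deriv by (metis DERIV_const DERIV_unique)
  then show "\<rho>' x = 0" by simp
  show "\<rho>'' x = 0" using rho'_deriv[of x] unfolding \<rho>' by (metis DERIV_const DERIV_unique)
qed

lemma mean_curv_const_rho:
  assumes "\<And>x. \<rho> x = c"
  shows "\<rho> x * \<bar>mean_curv x\<bar> = 2"
proof -
  have c: "c > 0" using rho_pos assms by metis
  have f': "f' x \<noteq> 0" using regular[of x] derivs_eq_0_of_const_rho[OF assms] by simp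
  have "sqrt (speed_sq x) = c * \<bar>f' x\<bar>"
    using c unfolding speed_sq_def derivs_eq_0_of_const_rho[OF assms] assms
    by (simp add: real_sqrt_abs abs_mult)
  then have "mean_curv x = 2 * f' x / (c * \<bar>f' x\<bar>)"
    unfolding mean_curv_def using c f'
    by (simp add: speed_sq_def derivs_eq_0_of_const_rho[OF assms] assms power2_eq_square power3_eq_cube)
  then show ?thesis using c f' by (simp add: assms abs_mult abs_divide)
qed

lemma winding_const_rho:
  assumes "\<And>x. \<rho> x = c" and "f (2*pi) = f 0 + 2 * of_int k * pi"
  shows "2 * pi \<le> \<bar>f (2*pi) - f 0\<bar>"
proof -
  have "k \<noteq> 0"
  proof
    assume "k = 0"
    then have "f 0 = f (2*pi)" using assms(2) by simp
    moreover have "continuous_on {0..2*pi} f"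
      by (intro continuous_at_imp_continuous_on ballI f_cont)
    moreover have "\<And>x. f differentiable (at x)"
      using f_deriv real_differentiable_def by blast
    ultimately obtain z where "DERIV f z :> 0" using Rolle[of 0 "2*pi" f] by auto
    then have "f' z = 0" using f_deriv DERIV_unique by blast
    then show False using regular[of z] derivs_eq_0_of_const_rho[OF assms(1)] by simp
  qed
  then have "1 \<le> \<bar>real_of_int k\<bar>" by linarith
  then show ?thesis using assms(2) pi_gt_zero by (simp add: abs_mult)
qed

lemma twisted_torus_of_const_rho:
  assumes "\<And>x. \<rho> x = c" and "f (2*pi) = f 0 + 2 * of_int k * pi"
  shows "twisted_torus \<rho> f = {(z, w). cmod z = c / sqrt 2 \<and> cmod w = c / sqrt 2}"
proof -
  have "\<rho> = (\<lambda>_. c)" and "c > 0" using assms(1) rho_pos by auto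
  moreover have "continuous_on {0..2*pi} f" by (intro continuous_at_imp_continuous_on ballI f_cont)
  ultimately show ?thesis using twisted_torus_const winding_const_rho[OF assms] by simp
qed

lemma rho_const_of_mean_curv:
  assumes per: "\<And>x. \<rho> (x + 2*pi) = \<rho> x"
    and H: "\<And>x. x \<in> {0..<2*pi} \<Longrightarrow> \<rho> x * \<bar>mean_curv x\<bar> = 2"
  shows "\<exists>c. \<forall>x. \<rho> x = c"
proof -
  have "(\<lambda>x. \<rho> x * mean_curv x) constant_on {0..<2*pi}"
  proof (rule continuous_finite_range_constant)
    show "continuous_on {0..<2*pi} (\<lambda>x. \<rho> x * mean_curv x)"
      by (intro continuous_at_imp_continuous_on ballI continuous_intros rho_cont mean_curv_cont)
    have "(\<lambda>x. \<rho> x * mean_curv x) ` {0..<2*pi} \<subseteq> {2, -2}"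
      using H rho_pos by (force simp: abs_if split: if_splits)
    then show "finite ((\<lambda>x. \<rho> x * mean_curv x) ` {0..<2*pi})" by (rule finite_subset) simp
  qed simp
  then obtain a where a: "\<And>x. x \<in> {0..<2*pi} \<Longrightarrow> \<rho> x * mean_curv x = a"
    by (auto simp: constant_on_def)
  define \<epsilon> where "\<epsilon> = a / 2"
  have "\<bar>a\<bar> = 2" using H[of 0] a[of 0] rho_pos[of 0] by (simp add: abs_mult)
  then have "a = 2 \<or> a = -2" by linarith
  then have \<epsilon>: "\<bar>\<epsilon>\<bar> = 1" and \<epsilon>H: "\<And>x. x \<in> {0..<2*pi} \<Longrightarrow> \<epsilon> * \<rho> x * mean_curv x = 2"
    using a by (auto simp: \<epsilon>_def mult.assoc)
  obtain C where C: "\<And>x. x \<in> {0..<2*pi} \<Longrightarrow> first_integral \<epsilon> x = C"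
  proof -
    have "\<exists>C. \<forall>x\<in>{0..<2*pi}. first_integral \<epsilon> x = C"
    proof (rule has_field_derivative_zero_constant)
      fix x :: real assume "x \<in> {0..<2*pi}"
      then show "(first_integral \<epsilon> has_field_derivative 0) (at x within {0..<2*pi})"
        using first_integral_deriv[of \<epsilon> x] \<epsilon>H[of x] by (simp add: has_field_derivative_at_within mult.assoc)
    qed (rule convex_real_interval)
    with that show ?thesis by blast
  qed
  have "continuous_on UNIV \<rho>" by (intro continuous_at_imp_continuous_on ballI rho_cont)
  moreover have "(0::real) < 2 * pi" by simp
  ultimately obtain b where b: "b \<in> {0..<2*pi}" and max: "\<And>y. \<rho> y \<le> \<rho> b"
    using periodic_attains_max per by metis
  have "\<rho>' b = 0" using DERIV_local_max[OF rho_deriv[of b], of 1] max by auto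
  then consider "C = 0" | "C = 2 * \<rho> b ^ 2"
    using first_integral_critical[OF \<epsilon>] C[OF b] by auto
  then have const: "\<rho> x = \<rho> b" if x: "x \<in> {0..<2*pi}" for x
  proof cases
    case 1
    have "\<exists>c. \<forall>x\<in>{0..<2*pi}. \<rho> x = c"
    proof (rule has_field_derivative_zero_constant)
      fix x :: real assume "x \<in> {0..<2*pi}"
      then have "\<rho>' x = 0" using first_integral_eq_0_imp[OF \<epsilon>] C 1 by blast
      then show "(\<rho> has_field_derivative 0) (at x within {0..<2*pi})"
        using rho_deriv[of x] by (simp add: has_field_derivative_at_within)
    qed (rule convex_real_interval)
    then show ?thesis using x b by metis
  next
    case 2
    then have "2 * \<rho> b ^ 2 \<le> 2 * \<rho> x ^ 2" using first_integral_le[OF \<epsilon>, of x] C[OF x] by simp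
    then have "\<rho> b \<le> \<rho> x" using rho_pos[of x] rho_pos[of b] by (simp add: power_mono_iff)
    then show ?thesis using max[of x] by simp
  qed
  have "range \<rho> = \<rho> ` {0..<2*pi}" using per by (intro range_periodic) simp_all
  then have "\<rho> x = \<rho> b" for x using const by (metis imageE rangeI)
  then show ?thesis by blast
qed

end

lemma twisted_profile_smooth:
  assumes "smooth_real \<rho>" and "smooth_real f" and "\<And>x. \<rho> x > 0"
    and "\<And>x. vector_derivative (\<lambda>t. complex_of_real (\<rho> t) * exp (\<i> * complex_of_real (f t))) (at x) \<noteq> 0"
  shows "twisted_profile \<rho> f (deriv \<rho>) (deriv (deriv \<rho>)) (deriv f) (deriv (deriv f))"
proof
  have "smooth_real (deriv \<rho>)" "smooth_real (deriv (deriv \<rho>))"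
    and "smooth_real (deriv f)" "smooth_real (deriv (deriv f))"
    using assms(1,2) by (simp_all add: smooth_real_deriv)
  then show "(\<rho> has_real_derivative deriv \<rho> x) (at x)" "(deriv \<rho> has_real_derivative deriv (deriv \<rho>) x) (at x)"
    "(f has_real_derivative deriv f x) (at x)" "(deriv f has_real_derivative deriv (deriv f) x) (at x)"
    "isCont (deriv (deriv \<rho>)) x" "isCont (deriv (deriv f)) x" for x
    using assms(1,2) by (simp_all add: smooth_real_has_deriv smooth_real_isCont)
  show "deriv \<rho> x \<noteq> 0 \<or> deriv f x \<noteq> 0" for x
    using regular_polar_curve[OF smooth_real_has_deriv[OF assms(1)] smooth_real_has_deriv[OF assms(2)] assms(4)] .
qed (use assms(3) in simp)

theorem mainTheorem7:
  fixes \<rho> f :: "real \<Rightarrow> real" and k :: int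
  assumes smooth_rho: "smooth_real \<rho>"
    and smooth_f: "smooth_real f"
    and rho_pos: "\<forall>\<beta>. \<rho> \<beta> > 0"
    and rho_per: "\<forall>\<beta>. \<rho> (\<beta> + 2*pi) = \<rho> \<beta>"
    and f_per: "\<forall>\<beta>. f (\<beta> + 2*pi) = f \<beta> + 2 * of_int k * pi"
    and regular: "\<forall>\<beta>. vector_derivative (\<lambda>t. complex_of_real (\<rho> t) * exp (\<i> * complex_of_real (f t))) (at \<beta>) \<noteq> 0"
    and simple: "inj_on (\<lambda>t. complex_of_real (\<rho> t) * exp (\<i> * complex_of_real (f t))) {0..<2*pi}"
  shows "(\<exists>r1 r2. r1 > 0 \<and> r2 > 0 \<and>
            twisted_torus \<rho> f = {(z, w). cmod z = r1 \<and> cmod w = r2})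
         \<longleftrightarrow> (\<forall>\<alpha>\<in>{0..<2*pi}. \<forall>\<beta>\<in>{0..<2*pi}.
                \<rho> \<beta> * norm (mean_curv_vec (twisted_F \<rho> f) \<alpha> \<beta>) = 2)"
proof -
  interpret twisted_profile \<rho> f "deriv \<rho>" "deriv (deriv \<rho>)" "deriv f" "deriv (deriv f)"
    using twisted_profile_smooth smooth_rho smooth_f rho_pos regular by blast
  show ?thesis
  proof
    assume "\<exists>r1 r2. r1 > 0 \<and> r2 > 0 \<and> twisted_torus \<rho> f = {(z, w). cmod z = r1 \<and> cmod w = r2}"
    then obtain r1 r2 where "twisted_torus \<rho> f = {(z, w). cmod z = r1 \<and> cmod w = r2}" by blast
    with rho_pos rho_per have "\<rho> x = sqrt 2 * r1" for x
      by (intro product_twisted_torus_imp_const) simp_all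
    then show "\<forall>\<alpha>\<in>{0..<2*pi}. \<forall>\<beta>\<in>{0..<2*pi}. \<rho> \<beta> * norm (mean_curv_vec (twisted_F \<rho> f) \<alpha> \<beta>) = 2"
      unfolding norm_mean_curv_vec_twisted_F using mean_curv_const_rho by blast
  next
    assume "\<forall>\<alpha>\<in>{0..<2*pi}. \<forall>\<beta>\<in>{0..<2*pi}. \<rho> \<beta> * norm (mean_curv_vec (twisted_F \<rho> f) \<alpha> \<beta>) = 2"
    then have "\<rho> \<beta> * \<bar>mean_curv \<beta>\<bar> = 2" if "\<beta> \<in> {0..<2*pi}" for \<beta>
      using that by (force simp: norm_mean_curv_vec_twisted_F)
    with rho_per obtain c where c: "\<And>x. \<rho> x = c" using rho_const_of_mean_curv by blast
    with rho_pos have "c > 0" by metis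
    with twisted_torus_of_const_rho[OF c f_per[rule_format, of 0, simplified]]
    show "\<exists>r1 r2. r1 > 0 \<and> r2 > 0 \<and> twisted_torus \<rho> f = {(z, w). cmod z = r1 \<and> cmod w = r2}"
      by (intro exI[of _ "c / sqrt 2"]) simp
  qed
qed

end
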